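(* Consider $d=1$ and steps bounded by $B$. Let $\hat{\pi}$ be an environment kernel with $\hat\pi(\cdot,1)>0$ $\mathbb{P}$-a.s. and $E_0^{\hat\pi}[t_1]<\infty$, where $t_1:=\inf\{k\ge0:X_k\ge1\}$. Then: (a) for $\mathbb{P}$-a.e. $\omega$ the limit $\phi(\omega):=\lim_{x\to-\infty}E_x^{\hat\pi,\omega}\left[\sum_{k=0}^\infty \mathbf{1}_{X_k=0}\right]$ exists and satisfies $\phi(\omega)>0$; (b) $\phi\in L^1(\mathbb{P})$; (c) the probability measure $\mathbb{Q}$ with $\mathrm{d}\mathbb{Q}=\phi\,\mathrm{d}\mathbb{P}/\|\phi\|_{L^1(\mathbb{P})}$ is $\hat\pi$-invariant, i.e. $\sum_{z\in\mathcal{R}}\phi(T_{-z}\omega)\hat\pi(T_{-z}\omega,z)=\phi(\omega)$ for $\mathbb{P}$-a.e. $\omega$.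
   Context: Let $B\ge1$, $\mathcal{R}:=\{z\in\mathbb{Z}:0<|z|\le B\}$. An environment is $\omega=(\omega_x)_{x\in\mathbb{Z}}$ with $\omega_x=(\pi(x,x+z))_{z\in\mathcal{R}}$ a probability vector; $\Omega$ is the space of environments (product topology, Borel $\sigma$-algebra $\mathcal{B}$), $(T_z\omega)_x=\omega_{x+z}$, and $\mathbb{P}$ is a probability on $\Omega$ stationary and ergodic under shifts. An environment kernel is a function $\hat\pi:\Omega\times\mathcal{R}\to[0,\infty)$ with $\hat\pi(\cdot,z)$ measurable for each $z$ and $\sum_{z\in\mathcal{R}}\hat\pi(\cdot,z)=1$ $\mathbb{P}$-a.s. For $x\in\mathbb{Z}$, $\omega\in\Omega$, $P_x^{\hat\pi,\omega}$ is the law of the Markov chain $(X_n)_{n\ge0}$ with $X_0=x$ and $P(X_{n+1}=y+z\mid X_n=y)=\hat\pi(T_y\omega,z)$; $P_x^{\hat\pi}:=\mathbb{P}\times P_x^{\hat\pi,\omega}$ (the averaged law $\int P_x^{\hat\pi,\omega}(\cdot)\,\mathrm{d}\mathbb{P}(\omega)$), with expectations $E_x^{\hat\pi,\omega}$, $E_x^{\hat\pi}$. *)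

theory Defs
  imports "HOL-Probability.Probability"
begin

type_synonym env = "int \<Rightarrow> int \<Rightarrow> real"
  (* \<omega> x z = \<pi>(x, x+z), the jump probability from site x by z *)

definition steps :: "nat \<Rightarrow> int set" where
  "steps B = {z. 0 < \<bar>z\<bar> \<and> \<bar>z\<bar> \<le> int B}"

definition shift :: "int \<Rightarrow> (int \<Rightarrow> 'a) \<Rightarrow> (int \<Rightarrow> 'a)" where
  "shift z \<omega> = (\<lambda>x. \<omega> (x + z))"

definition env_space :: "env measure" where
  "env_space = PiM UNIV (\<lambda>_. PiM UNIV (\<lambda>_. borel))"

definition is_env :: "nat \<Rightarrow> env \<Rightarrow> bool" where
  "is_env B \<omega> \<longleftrightarrow> (\<forall>x. (\<forall>z\<in>steps B. 0 \<le> \<omega> x z) \<and> (\<Sum>z\<in>steps B. \<omega> x z) = 1)"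

definition stationary_ergodic :: "nat \<Rightarrow> env measure \<Rightarrow> bool" where
  "stationary_ergodic B P \<longleftrightarrow>
     prob_space P \<and> sets P = sets env_space \<and>
     (AE \<omega> in P. is_env B \<omega>) \<and>
     (\<forall>z. distr P P (shift z) = P) \<and>
     (\<forall>A\<in>sets P. (\<forall>z. shift z -` A = A) \<longrightarrow> measure P A = 0 \<or> measure P A = 1)"

definition env_kernel :: "nat \<Rightarrow> env measure \<Rightarrow> (env \<Rightarrow> int \<Rightarrow> real) \<Rightarrow> bool" where
  "env_kernel B P pih \<longleftrightarrow>
     (\<forall>z\<in>steps B. (\<lambda>\<omega>. pih \<omega> z) \<in> borel_measurable P) \<and>
     (\<forall>\<omega>. \<forall>z\<in>steps B. 0 \<le> pih \<omega> z) \<and>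
     (AE \<omega> in P. (\<Sum>z\<in>steps B. pih \<omega> z) = 1)"

text \<open>n-step transition probabilities P_x^{pih,omega}(X_n = y) of the quenched chain.\<close>
fun trans_prob :: "nat \<Rightarrow> (env \<Rightarrow> int \<Rightarrow> real) \<Rightarrow> nat \<Rightarrow> env \<Rightarrow> int \<Rightarrow> int \<Rightarrow> real" where
  "trans_prob B pih 0 \<omega> x y = (if x = y then 1 else 0)"
| "trans_prob B pih (Suc n) \<omega> x y =
     (\<Sum>z\<in>steps B. trans_prob B pih n \<omega> x (y - z) * pih (shift (y - z) \<omega>) z)"

text \<open>stay_prob n omega x = P_x^{pih,omega}(X_0 \<le> 0, ..., X_n \<le> 0).\<close>
fun stay_prob :: "nat \<Rightarrow> (env \<Rightarrow> int \<Rightarrow> real) \<Rightarrow> nat \<Rightarrow> env \<Rightarrow> int \<Rightarrow> real" where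
  "stay_prob B pih 0 \<omega> x = (if x \<le> 0 then 1 else 0)"
| "stay_prob B pih (Suc n) \<omega> x =
     (if x \<le> 0 then (\<Sum>z\<in>steps B. pih (shift x \<omega>) z * stay_prob B pih n \<omega> (x + z)) else 0)"

text \<open>E_x^{pih,omega}[sum_k 1_{X_k = 0}] = sum_k P_x(X_k = 0).\<close>
definition green :: "nat \<Rightarrow> (env \<Rightarrow> int \<Rightarrow> real) \<Rightarrow> env \<Rightarrow> int \<Rightarrow> ennreal" where
  "green B pih \<omega> x = (\<Sum>k. ennreal (trans_prob B pih k \<omega> x 0))"

text \<open>E_0^{pih,omega}[t_1] = sum_n P_0(t_1 > n), t_1 = inf{k \<ge> 0: X_k \<ge> 1}.\<close>
definition expected_t1 :: "nat \<Rightarrow> (env \<Rightarrow> int \<Rightarrow> real) \<Rightarrow> env \<Rightarrow> ennreal" where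
  "expected_t1 B pih \<omega> = (\<Sum>n. ennreal (stay_prob B pih n \<omega> 0))"

end

theory Submission
  imports Defs
begin

text \<open>Fix an environment and let \<open>G(x)\<close> be the expected number of visits to \<open>0\<close> of the walk
  started at \<open>x\<close>. Cutting a path at the times its running maximum increases bounds \<open>G(x)\<close> by a sum
  over levels \<open>m \<ge> 0\<close> of the expected visits to \<open>0\<close> of the walk started at \<open>m\<close> and killed above
  \<open>m\<close>. Moving the level into the environment, stationarity turns the integral of this bound into
  the expected time spent in \<open>(-\<infinity>, 0]\<close> before \<open>t\<^sub>1\<close>, so the bound is integrable.

  Jumps are at most \<open>B\<close>, so for \<open>c \<le> 0\<close> a walk started below \<open>c\<close> enters \<open>[c, \<infinity>)\<close> in the window
  \<open>{c, \<dots>, c + B - 1}\<close>, and \<open>G\<close> below \<open>c\<close> is an average of its values on that window. From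
  \<open>c - B, \<dots>, c - 1\<close> the walk reaches \<open>c\<close> itself by unit steps with probability at least the
  product of the \<open>B\<close> unit-step probabilities below \<open>c\<close>; so the oscillation of \<open>G\<close> over windows
  shrinks by a factor \<open>1 - \<epsilon>\<close> whenever that product exceeds \<open>\<epsilon>\<close>, which by ergodicity happens for
  infinitely many \<open>c \<rightarrow> -\<infinity>\<close>. Hence \<open>G\<close> converges at \<open>-\<infinity>\<close>, to a positive limit \<open>\<phi>\<close>. Letting
  \<open>x \<rightarrow> -\<infinity>\<close> in the last-step decomposition of \<open>G(x)\<close> gives the invariance of \<open>\<phi>\<close>.\<close>

lemma ennreal_suminf_split_head: "(\<Sum>n. f n) = f 0 + (\<Sum>n. f (Suc n))" for f :: "nat \<Rightarrow> ennreal"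
  using suminf_offset[of f 1] by (simp add: add.commute)

lemma ennreal_suminf_neq_top_LIMSEQ_zero:
  fixes f :: "nat \<Rightarrow> ennreal"
  assumes "suminf f \<noteq> \<infinity>"
  shows "f \<longlonglongrightarrow> 0"
proof -
  have "f n \<noteq> \<infinity>" for n
    using assms ennreal_suminf_lessD[of f \<infinity> n] by (simp add: less_top)
  then have f_eq: "f = (\<lambda>n. ennreal (enn2real (f n)))"
    by (simp add: fun_eq_iff ennreal_enn2real_if)
  then have "summable (\<lambda>n. enn2real (f n))"
    using assms by (intro summable_suminf_not_top) (auto simp: top_unique)
  then have "(\<lambda>n. ennreal (enn2real (f n))) \<longlonglongrightarrow> ennreal 0"
    by (intro tendsto_ennrealI summable_LIMSEQ_zero)
  then show ?thesis by (subst f_eq) simp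
qed

lemma weighted_sum_diff_le:
  fixes a a' u :: "'a \<Rightarrow> real"
  assumes "finite W" and "c \<in> W"
    and "\<And>w. w \<in> W \<Longrightarrow> 0 \<le> a w" and "\<And>w. w \<in> W \<Longrightarrow> 0 \<le> a' w"
    and "sum a W = 1" and "sum a' W = 1"
    and "b \<le> a c" and "b \<le> a' c"
    and "\<And>w. w \<in> W \<Longrightarrow> m \<le> u w" and "\<And>w. w \<in> W \<Longrightarrow> u w \<le> M"
  shows "(\<Sum>w\<in>W. a w * u w) - (\<Sum>w\<in>W. a' w * u w) \<le> (1 - b) * (M - m)"
proof -
  have split: "(\<Sum>w\<in>W. f w) = f c + (\<Sum>w\<in>W - {c}. f w)" for f :: "'a \<Rightarrow> real"
    by (rule sum.remove[OF assms(1,2)])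
  have "(\<Sum>w\<in>W - {c}. a w * u w) \<le> (\<Sum>w\<in>W - {c}. a w * M)"
    using assms by (intro sum_mono mult_left_mono) auto
  also have "\<dots> = (1 - a c) * M"
    using split[of a] assms(5) by (simp add: sum_distrib_right[symmetric])
  finally have upper: "(\<Sum>w\<in>W. a w * u w) \<le> a c * u c + (1 - a c) * M"
    using split[of "\<lambda>w. a w * u w"] by simp
  have "(1 - a' c) * m = (\<Sum>w\<in>W - {c}. a' w * m)"
    using split[of a'] assms(6) by (simp add: sum_distrib_right[symmetric])
  also have "\<dots> \<le> (\<Sum>w\<in>W - {c}. a' w * u w)"
    using assms by (intro sum_mono mult_left_mono) auto
  finally have lower: "a' c * u c + (1 - a' c) * m \<le> (\<Sum>w\<in>W. a' w * u w)"
    using split[of "\<lambda>w. a' w * u w"] by simp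
  have "b * (M - u c) \<le> a c * (M - u c)" and "b * (u c - m) \<le> a' c * (u c - m)"
    using assms by (intro mult_right_mono; force)+
  with upper lower show ?thesis by (simp add: algebra_simps)
qed

lemma tendsto_at_bot_if_Cauchy:
  fixes u :: "'a::{linorder,no_bot} \<Rightarrow> 'b::complete_space"
  assumes "\<And>e. 0 < e \<Longrightarrow> \<exists>c. \<forall>x y. x < c \<longrightarrow> y < c \<longrightarrow> dist (u x) (u y) < e"
  shows "\<exists>L. (u \<longlongrightarrow> L) at_bot"
proof -
  have "cauchy_filter (filtermap u at_bot)"
    unfolding cauchy_filter_metric_filtermap
  proof (intro allI impI)
    fix e :: real assume "0 < e"
    then obtain c where "\<forall>x y. x < c \<longrightarrow> y < c \<longrightarrow> dist (u x) (u y) < e" using assms by blast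
    then show "\<exists>P. eventually P at_bot \<and> (\<forall>x y. P x \<and> P y \<longrightarrow> dist (u x) (u y) < e)"
      by (intro exI[of _ "\<lambda>x. x < c"]) (auto simp: eventually_at_bot_dense)
  qed
  moreover have "filtermap u at_bot \<noteq> bot"
    using trivial_limit_at_bot_linorder by (simp add: filtermap_bot_iff)
  ultimately obtain L where "filtermap u at_bot \<le> nhds L"
    using cauchy_filter_complete_converges[OF _ complete_UNIV] by (metis principal_UNIV top_greatest)
  then show ?thesis unfolding filterlim_def by blast
qed

section \<open>Random walks on the integers\<close>

text \<open>A kernel \<open>p :: int \<Rightarrow> int \<Rightarrow> ennreal\<close> gives the probability \<open>p x z\<close> of the jump from \<open>x\<close> to
  \<open>x + z\<close>, \<open>z \<in> S\<close>. \<open>walk_prob_below\<close> and \<open>stay_below\<close> only count paths that stay in \<open>{..M}\<close> at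
  all times, and \<open>first_entrance c k x w\<close> is the probability of entering \<open>{c..}\<close> for the first
  time at time \<open>k\<close>, at \<open>w\<close>.\<close>

fun walk_prob :: "int set \<Rightarrow> (int \<Rightarrow> int \<Rightarrow> ennreal) \<Rightarrow> nat \<Rightarrow> int \<Rightarrow> int \<Rightarrow> ennreal" where
  "walk_prob S p 0 x y = (if x = y then 1 else 0)"
| "walk_prob S p (Suc n) x y = (\<Sum>z\<in>S. walk_prob S p n x (y - z) * p (y - z) z)"

fun walk_prob_below :: "int set \<Rightarrow> (int \<Rightarrow> int \<Rightarrow> ennreal) \<Rightarrow> int \<Rightarrow> nat \<Rightarrow> int \<Rightarrow> int \<Rightarrow> ennreal" where
  "walk_prob_below S p M 0 x y = (if x = y \<and> x \<le> M then 1 else 0)"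
| "walk_prob_below S p M (Suc n) x y =
     (if x \<le> M then (\<Sum>z\<in>S. p x z * walk_prob_below S p M n (x + z) y) else 0)"

fun stay_below :: "int set \<Rightarrow> (int \<Rightarrow> int \<Rightarrow> ennreal) \<Rightarrow> int \<Rightarrow> nat \<Rightarrow> int \<Rightarrow> ennreal" where
  "stay_below S p M 0 x = (if x \<le> M then 1 else 0)"
| "stay_below S p M (Suc n) x = (if x \<le> M then (\<Sum>z\<in>S. p x z * stay_below S p M n (x + z)) else 0)"

fun first_entrance :: "int set \<Rightarrow> (int \<Rightarrow> int \<Rightarrow> ennreal) \<Rightarrow> int \<Rightarrow> nat \<Rightarrow> int \<Rightarrow> int \<Rightarrow> ennreal" where
  "first_entrance S p c 0 x w = (if x = w \<and> c \<le> x then 1 else 0)"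
| "first_entrance S p c (Suc k) x w =
     (if x < c then (\<Sum>z\<in>S. p x z * first_entrance S p c k (x + z) w) else 0)"

definition green_fun :: "int set \<Rightarrow> (int \<Rightarrow> int \<Rightarrow> ennreal) \<Rightarrow> int \<Rightarrow> int \<Rightarrow> ennreal" where
  "green_fun S p x y = (\<Sum>n. walk_prob S p n x y)"

definition green_below :: "int set \<Rightarrow> (int \<Rightarrow> int \<Rightarrow> ennreal) \<Rightarrow> int \<Rightarrow> int \<Rightarrow> int \<Rightarrow> ennreal" where
  "green_below S p M x y = (\<Sum>n. walk_prob_below S p M n x y)"

definition exit_time :: "int set \<Rightarrow> (int \<Rightarrow> int \<Rightarrow> ennreal) \<Rightarrow> int \<Rightarrow> ennreal" where
  "exit_time S p m = (\<Sum>n. stay_below S p m n m)"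

definition entrance_dist :: "int set \<Rightarrow> (int \<Rightarrow> int \<Rightarrow> ennreal) \<Rightarrow> int \<Rightarrow> int \<Rightarrow> int \<Rightarrow> ennreal" where
  "entrance_dist S p c x w = (\<Sum>k. first_entrance S p c k x w)"

text \<open>Splitting a path at the times its running maximum increases bounds \<open>green_fun S p y 0\<close> by
  \<open>ladder_bound S p y\<close>: the visits to \<open>0\<close> made while the maximum equals \<open>m\<close> are those of a walk
  started at \<open>m\<close> and killed above \<open>m\<close>.\<close>

definition ladder_bound :: "int set \<Rightarrow> (int \<Rightarrow> int \<Rightarrow> ennreal) \<Rightarrow> int \<Rightarrow> ennreal" where
  "ladder_bound S p y = (\<Sum>j. green_below S p (y + int j) (y + int j) 0)"

lemma walk_prob_Suc_first:
  "walk_prob S p (Suc n) x y = (\<Sum>z\<in>S. p x z * walk_prob S p n (x + z) y)"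
proof (induction n arbitrary: y)
  case 0
  show ?case by (auto intro!: sum.cong simp: mult.commute)
next
  case (Suc n)
  have "walk_prob S p (Suc (Suc n)) x y
      = (\<Sum>z'\<in>S. (\<Sum>z\<in>S. p x z * walk_prob S p n (x + z) (y - z')) * p (y - z') z')"
    using Suc by simp
  also have "\<dots> = (\<Sum>z\<in>S. p x z * (\<Sum>z'\<in>S. walk_prob S p n (x + z) (y - z') * p (y - z') z'))"
    by (simp add: sum_distrib_left sum_distrib_right mult.assoc) (rule sum.swap)
  finally show ?case by simp
qed

lemma green_fun_first_step:
  "green_fun S p x y = (if x = y then 1 else 0) + (\<Sum>z\<in>S. p x z * green_fun S p (x + z) y)"
  unfolding green_fun_def
  by (subst ennreal_suminf_split_head)
     (simp only: walk_prob_Suc_first suminf_sum ennreal_suminf_cmult summableI walk_prob.simps(1))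

lemma green_fun_last_step:
  "green_fun S p x y = (if x = y then 1 else 0) + (\<Sum>z\<in>S. green_fun S p x (y - z) * p (y - z) z)"
  unfolding green_fun_def
  by (subst ennreal_suminf_split_head) (simp add: suminf_sum)

lemma walk_prob_below_target: "M < y \<Longrightarrow> walk_prob_below S p M n x y = 0"
  by (induction n arbitrary: x) auto

lemma green_below_first_step:
  "x \<le> M \<Longrightarrow>
   green_below S p M x y = (if x = y then 1 else 0) + (\<Sum>z\<in>S. p x z * green_below S p M (x + z) y)"
  unfolding green_below_def
  by (subst ennreal_suminf_split_head)
     (simp only: walk_prob_below.simps if_True suminf_sum ennreal_suminf_cmult summableI, simp)

lemma ladder_bound_Suc: "ladder_bound S p y = green_below S p y y 0 + ladder_bound S p (y + 1)"
  unfolding ladder_bound_def by (subst ennreal_suminf_split_head) (simp add: algebra_simps)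

lemma ladder_bound_antimono: "M \<le> y \<Longrightarrow> ladder_bound S p y \<le> ladder_bound S p M"
proof (induction "nat (y - M)" arbitrary: y)
  case 0
  then show ?case by simp
next
  case (Suc d)
  then have "ladder_bound S p (y - 1) \<le> ladder_bound S p M" by simp
  moreover have "ladder_bound S p y \<le> ladder_bound S p (y - 1)"
    using ladder_bound_Suc[of S p "y - 1"] by simp
  ultimately show ?case by (rule order_trans[rotated])
qed

lemma ladder_bound_nonpos: "y \<le> 0 \<Longrightarrow> ladder_bound S p y = ladder_bound S p 0"
proof (induction "nat (- y)" arbitrary: y)
  case 0
  then show ?case by simp
next
  case (Suc d)
  then have "ladder_bound S p (y + 1) = ladder_bound S p 0" by simp
  moreover have "green_below S p y y 0 = 0"
    using Suc by (simp add: green_below_def walk_prob_below_target)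
  ultimately show ?case by (simp add: ladder_bound_Suc[of S p y])
qed

lemma ladder_bound_le_zero: "ladder_bound S p y \<le> ladder_bound S p 0"
  using ladder_bound_antimono[of 0 y S p] ladder_bound_nonpos[of y S p] by (cases "0 \<le> y") auto

lemma stay_below_sum_first_step:
  "y \<le> M \<Longrightarrow> (\<Sum>n. stay_below S p M n y) = 1 + (\<Sum>z\<in>S. p y z * (\<Sum>n. stay_below S p M n (y + z)))"
  by (subst ennreal_suminf_split_head)
     (simp only: stay_below.simps if_True suminf_sum ennreal_suminf_cmult summableI)

lemma stay_below_above: "M < x \<Longrightarrow> stay_below S p M n x = 0"
  by (cases n) auto

lemma first_entrance_above:
  "c \<le> x \<Longrightarrow> first_entrance S p c k x w = (if k = 0 \<and> x = w then 1 else 0)"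
  by (cases k) auto

lemma entrance_dist_above: "c \<le> x \<Longrightarrow> entrance_dist S p c x w = (if x = w then 1 else 0)"
  unfolding entrance_dist_def by (subst ennreal_suminf_split_head) (simp add: first_entrance_above)

lemma entrance_dist_first_step:
  "x < c \<Longrightarrow> entrance_dist S p c x w = (\<Sum>z\<in>S. p x z * entrance_dist S p c (x + z) w)"
  unfolding entrance_dist_def
  by (subst ennreal_suminf_split_head)
     (simp only: first_entrance.simps if_True suminf_sum ennreal_suminf_cmult summableI, simp)

lemma walk_prob_below_sum_le_stay_below:
  "finite A \<Longrightarrow> (\<Sum>y\<in>A. walk_prob_below S p M n x y) \<le> stay_below S p M n x"
proof (induction n arbitrary: x)
  case 0
  have "(\<Sum>y\<in>A. walk_prob_below S p M 0 x y) = (\<Sum>y\<in>A. if y = x then (if x \<le> M then 1 else 0) else 0)"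
    by (intro sum.cong) auto
  then show ?case using 0 by (simp add: sum.delta)
next
  case (Suc n)
  have "(\<Sum>y\<in>A. walk_prob_below S p M (Suc n) x y)
      = (if x \<le> M then (\<Sum>z\<in>S. p x z * (\<Sum>y\<in>A. walk_prob_below S p M n (x + z) y)) else 0)"
    by (simp add: sum_distrib_left sum.swap[of _ A])
  also have "\<dots> \<le> stay_below S p M (Suc n) x"
    using Suc by (auto intro!: sum_mono mult_left_mono)
  finally show ?case .
qed

lemma walk_prob_shift: "walk_prob S (\<lambda>x. p (x + a)) n x y = walk_prob S p n (x + a) (y + a)"
  by (induction n arbitrary: y) (auto simp: algebra_simps)

lemma walk_prob_below_shift:
  "walk_prob_below S (\<lambda>x. p (x + a)) M n x y = walk_prob_below S p (M + a) n (x + a) (y + a)"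
  by (induction n arbitrary: x) (auto simp: algebra_simps)

lemma stay_below_shift: "stay_below S (\<lambda>x. p (x + a)) M n x = stay_below S p (M + a) n (x + a)"
  by (induction n arbitrary: x) (auto simp: algebra_simps)

lemma green_fun_shift: "green_fun S (\<lambda>x. p (x + a)) x y = green_fun S p (x + a) (y + a)"
  by (simp add: green_fun_def walk_prob_shift)

lemma green_below_shift:
  "green_below S (\<lambda>x. p (x + a)) M x y = green_below S p (M + a) (x + a) (y + a)"
  by (simp add: green_below_def walk_prob_below_shift)

lemma first_entrance_partial_above:
  "c \<le> x \<Longrightarrow> (\<Sum>k<Suc K. first_entrance S p c k x w) = (if x = w then 1 else 0)"
  by (induction K) (simp_all add: first_entrance_above)

lemma first_entrance_partial_first_step:
  "x < c \<Longrightarrow>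
   (\<Sum>k<Suc K. first_entrance S p c k x w) = (\<Sum>z\<in>S. p x z * (\<Sum>k<K. first_entrance S p c k (x + z) w))"
  by (subst sum.lessThan_Suc_shift) (simp add: sum_distrib_left, rule sum.swap)

locale stoch_kernel =
  fixes S :: "int set" and p :: "int \<Rightarrow> int \<Rightarrow> ennreal"
  assumes finite_steps: "finite S" and kernel_sum: "\<And>x. (\<Sum>z\<in>S. p x z) = 1"
begin

lemma kernel_le_1: "z \<in> S \<Longrightarrow> p x z \<le> 1"
  using member_le_sum[of z S "p x"] finite_steps kernel_sum[of x] by simp

lemma kernel_average_le_add:
  "(\<And>z. z \<in> S \<Longrightarrow> a z \<le> b z + L) \<Longrightarrow> (\<Sum>z\<in>S. p x z * a z) \<le> (\<Sum>z\<in>S. p x z * b z) + L"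
proof -
  assume "\<And>z. z \<in> S \<Longrightarrow> a z \<le> b z + L"
  then have "(\<Sum>z\<in>S. p x z * a z) \<le> (\<Sum>z\<in>S. p x z * (b z + L))"
    by (intro sum_mono mult_left_mono) auto
  also have "\<dots> = (\<Sum>z\<in>S. p x z * b z) + L"
    by (simp add: distrib_left sum.distrib flip: sum_distrib_right) (simp add: kernel_sum)
  finally show ?thesis .
qed

lemma green_fun_partial_le:
  "y \<le> M \<Longrightarrow> (\<Sum>n<N. walk_prob S p n y 0) \<le> green_below S p M y 0 + ladder_bound S p (M + 1)"
proof (induction N arbitrary: M y)
  case 0
  then show ?case by simp
next
  case (Suc N)
  have step: "(\<Sum>n<N. walk_prob S p n (y + z) 0) \<le> green_below S p M (y + z) 0 + ladder_bound S p (M + 1)"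
    for z
  proof (cases "y + z \<le> M")
    case True
    then show ?thesis by (rule Suc.IH)
  next
    case False
    have "(\<Sum>n<N. walk_prob S p n (y + z) 0) \<le> green_below S p (y + z) (y + z) 0 + ladder_bound S p (y + z + 1)"
      by (rule Suc.IH) simp
    also have "\<dots> = ladder_bound S p (y + z)"
      by (rule ladder_bound_Suc[symmetric])
    also have "\<dots> \<le> ladder_bound S p (M + 1)"
      using False by (intro ladder_bound_antimono) auto
    also have "\<dots> \<le> green_below S p M (y + z) 0 + ladder_bound S p (M + 1)"
      by simp
    finally show ?thesis .
  qed
  have "(\<Sum>n<Suc N. walk_prob S p n y 0) = walk_prob S p 0 y 0 + (\<Sum>n<N. walk_prob S p (Suc n) y 0)"
    by (rule sum.lessThan_Suc_shift)
  also have "(\<Sum>n<N. walk_prob S p (Suc n) y 0) = (\<Sum>z\<in>S. p y z * (\<Sum>n<N. walk_prob S p n (y + z) 0))"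
    by (simp only: walk_prob_Suc_first sum_distrib_left) (rule sum.swap)
  also have "walk_prob S p 0 y 0 + \<dots> \<le> walk_prob S p 0 y 0 + ((\<Sum>z\<in>S. p y z * green_below S p M (y + z) 0) + ladder_bound S p (M + 1))"
    by (rule add_left_mono, rule kernel_average_le_add, rule step)
  also have "\<dots> = green_below S p M y 0 + ladder_bound S p (M + 1)"
    using green_below_first_step[OF Suc.prems] by (simp add: add.assoc)
  finally show ?case .
qed

lemma green_fun_le_ladder_bound: "green_fun S p y 0 \<le> ladder_bound S p 0"
proof -
  have "green_fun S p y 0 \<le> green_below S p y y 0 + ladder_bound S p (y + 1)"
    unfolding green_fun_def by (rule suminf_le_const) (auto intro: green_fun_partial_le)
  also have "\<dots> = ladder_bound S p y"
    by (rule ladder_bound_Suc[symmetric])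
  also have "\<dots> \<le> ladder_bound S p 0"
    by (rule ladder_bound_le_zero)
  finally show ?thesis .
qed

lemma stay_below_partial_le:
  "M < c \<Longrightarrow> y \<le> M \<Longrightarrow>
   (\<Sum>n<N. stay_below S p (c - 1) n y) \<le> (\<Sum>n. stay_below S p M n y) + (\<Sum>m\<in>{M<..<c}. exit_time S p m)"
proof (induction N arbitrary: M y)
  case 0
  then show ?case by simp
next
  case (Suc N)
  have step: "(\<Sum>n<N. stay_below S p (c - 1) n (y + z))
      \<le> (\<Sum>n. stay_below S p M n (y + z)) + (\<Sum>m\<in>{M<..<c}. exit_time S p m)" for z
  proof (cases "y + z \<le> M")
    case True
    then show ?thesis using Suc.prems by (intro Suc.IH) auto
  next
    case above: False
    show ?thesis
    proof (cases "y + z < c")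
      case True
      have "(\<Sum>n<N. stay_below S p (c - 1) n (y + z))
          \<le> exit_time S p (y + z) + (\<Sum>m\<in>{y + z<..<c}. exit_time S p m)"
        unfolding exit_time_def[of S p "y + z"] using True by (intro Suc.IH) auto
      also have "\<dots> = (\<Sum>m\<in>insert (y + z) {y + z<..<c}. exit_time S p m)"
        by simp
      also have "\<dots> \<le> (\<Sum>m\<in>{M<..<c}. exit_time S p m)"
        using above True by (intro sum_mono2) auto
      finally show ?thesis by (simp add: add_increasing)
    qed (simp add: stay_below_above)
  qed
  have "(\<Sum>n<Suc N. stay_below S p (c - 1) n y)
      = 1 + (\<Sum>z\<in>S. p y z * (\<Sum>n<N. stay_below S p (c - 1) n (y + z)))"
    using Suc.prems by (subst sum.lessThan_Suc_shift) (simp add: sum_distrib_left, rule sum.swap)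
  also have "\<dots> \<le> 1 + ((\<Sum>z\<in>S. p y z * (\<Sum>n. stay_below S p M n (y + z))) + (\<Sum>m\<in>{M<..<c}. exit_time S p m))"
    by (rule add_left_mono, rule kernel_average_le_add, rule step)
  also have "\<dots> = (\<Sum>n. stay_below S p M n y) + (\<Sum>m\<in>{M<..<c}. exit_time S p m)"
    using stay_below_sum_first_step[OF Suc.prems(2)] by (simp add: add.assoc)
  finally show ?case .
qed

lemma stay_below_LIMSEQ_zero:
  assumes "\<And>m. exit_time S p m < \<infinity>" and "y < c"
  shows "(\<lambda>n. stay_below S p (c - 1) n y) \<longlonglongrightarrow> 0"
proof (rule ennreal_suminf_neq_top_LIMSEQ_zero)
  have "(\<Sum>n. stay_below S p (c - 1) n y) \<le> exit_time S p y + (\<Sum>m\<in>{y<..<c}. exit_time S p m)"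
    unfolding exit_time_def[of S p y] using \<open>y < c\<close> by (intro suminf_le_const stay_below_partial_le) auto
  also have "\<dots> < \<infinity>"
    using assms(1) by (simp add: sum_Pinfty less_top)
  finally show "(\<Sum>n. stay_below S p (c - 1) n y) \<noteq> \<infinity>" by simp
qed

end

section \<open>Entrance into a half-line\<close>

locale bounded_kernel = stoch_kernel +
  fixes B :: nat
  assumes steps_le: "\<And>z. z \<in> S \<Longrightarrow> z \<le> int B" and one_in_steps: "1 \<in> S"
begin

text \<open>Jumps being at most \<open>B\<close>, a walk started below \<open>c\<close> first enters \<open>{c..}\<close> inside \<open>window c\<close>.\<close>

definition window :: "int \<Rightarrow> int set" where
  "window c = {c..c + int B - 1}"

definition ladder_weight :: "int \<Rightarrow> ennreal" where
  "ladder_weight c = (\<Prod>i\<in>{1..B}. p (c - int i) 1)"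

lemma B_pos: "1 \<le> B"
  using steps_le[OF one_in_steps] by simp

lemma finite_window: "finite (window c)"
  by (simp add: window_def)

lemma mem_window_self: "c \<in> window c"
  using B_pos by (simp add: window_def)

lemma first_entrance_mass:
  "x \<le> c + int B - 1 \<Longrightarrow>
   (\<Sum>w\<in>window c. \<Sum>k<Suc n. first_entrance S p c k x w) + stay_below S p (c - 1) n x = 1"
proof (induction n arbitrary: x)
  case 0
  then show ?case by (cases "c \<le> x") (auto simp: window_def)
next
  case (Suc n)
  show ?case
  proof (cases "c \<le> x")
    case True
    then show ?thesis
      using Suc.prems by (simp only: first_entrance_partial_above) (simp add: finite_window window_def)
  next
    case False
    then have xc: "x < c" by simp
    have "(\<Sum>w\<in>window c. \<Sum>k<Suc (Suc n). first_entrance S p c k x w)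
        = (\<Sum>z\<in>S. p x z * (\<Sum>w\<in>window c. \<Sum>k<Suc n. first_entrance S p c k (x + z) w))"
      by (simp only: first_entrance_partial_first_step[OF xc] sum_distrib_left) (rule sum.swap)
    moreover have "stay_below S p (c - 1) (Suc n) x = (\<Sum>z\<in>S. p x z * stay_below S p (c - 1) n (x + z))"
      using xc by simp
    ultimately have "(\<Sum>w\<in>window c. \<Sum>k<Suc (Suc n). first_entrance S p c k x w) + stay_below S p (c - 1) (Suc n) x
        = (\<Sum>z\<in>S. p x z * ((\<Sum>w\<in>window c. \<Sum>k<Suc n. first_entrance S p c k (x + z) w)
                                + stay_below S p (c - 1) n (x + z)))"
      by (simp only: distrib_left sum.distrib)
    also have "\<dots> = (\<Sum>z\<in>S. p x z)"
    proof (rule sum.cong[OF refl])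
      fix z assume "z \<in> S"
      then have "x + z \<le> c + int B - 1" using xc steps_le[of z] by linarith
      then show "p x z * ((\<Sum>w\<in>window c. \<Sum>k<Suc n. first_entrance S p c k (x + z) w)
                         + stay_below S p (c - 1) n (x + z)) = p x z"
        by (simp only: Suc.IH mult_1_right)
    qed
    finally show ?thesis by (simp add: kernel_sum)
  qed
qed

lemma entrance_dist_sum:
  assumes "\<And>m. exit_time S p m < \<infinity>" and "x \<le> c + int B - 1"
  shows "(\<Sum>w\<in>window c. entrance_dist S p c x w) = 1"
proof (cases "c \<le> x")
  case True
  then show ?thesis using assms(2) by (simp add: entrance_dist_above sum.delta finite_window window_def)
next
  case False
  define g where "g k = (\<Sum>w\<in>window c. first_entrance S p c k x w)" for k
  have "(\<lambda>n. (\<Sum>k<Suc n. g k) + stay_below S p (c - 1) n x) \<longlonglongrightarrow> suminf g + 0"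
    using False by (intro tendsto_add LIMSEQ_Suc summable_LIMSEQ stay_below_LIMSEQ_zero assms) auto
  moreover have "(\<Sum>k<Suc n. g k) + stay_below S p (c - 1) n x = 1" for n
    using first_entrance_mass[OF assms(2), of n] unfolding g_def by (subst sum.swap) simp
  ultimately have "suminf g = 1"
    using LIMSEQ_unique[OF _ tendsto_const] by auto
  then show ?thesis
    unfolding entrance_dist_def g_def by (simp add: suminf_sum)
qed

lemma if_one_zero_mult: "(if P then 1 else 0) * a = (if P then a else (0::ennreal))"
  by simp

lemma entrance_partial_green_le:
  assumes "c \<le> 0"
  shows "x \<le> c + int B - 1 \<Longrightarrow>
    (\<Sum>w\<in>window c. (\<Sum>k<K. first_entrance S p c k x w) * green_fun S p w 0) \<le> green_fun S p x 0"
proof (induction K arbitrary: x)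
  case 0
  then show ?case by simp
next
  case (Suc K)
  show ?case
  proof (cases "c \<le> x")
    case True
    then show ?thesis
      using Suc.prems
      by (simp only: first_entrance_partial_above) (simp add: finite_window window_def if_one_zero_mult)
  next
    case False
    then have xc: "x < c" by simp
    have "(\<Sum>w\<in>window c. (\<Sum>k<Suc K. first_entrance S p c k x w) * green_fun S p w 0)
        = (\<Sum>z\<in>S. p x z * (\<Sum>w\<in>window c. (\<Sum>k<K. first_entrance S p c k (x + z) w) * green_fun S p w 0))"
      by (simp only: first_entrance_partial_first_step[OF xc] sum_distrib_left sum_distrib_right mult.assoc)
         (rule sum.swap)
    also have "\<dots> \<le> (\<Sum>z\<in>S. p x z * green_fun S p (x + z) 0)"
    proof (intro sum_mono mult_left_mono)
      fix z assume "z \<in> S"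
      then have "x + z \<le> c + int B - 1" using xc steps_le[of z] by linarith
      then show "(\<Sum>w\<in>window c. (\<Sum>k<K. first_entrance S p c k (x + z) w) * green_fun S p w 0)
          \<le> green_fun S p (x + z) 0"
        by (rule Suc.IH)
    qed auto
    also have "\<dots> \<le> green_fun S p x 0"
      by (subst (2) green_fun_first_step) simp
    finally show ?thesis .
  qed
qed

lemma green_partial_le_entrance:
  assumes "c \<le> 0"
  shows "x \<le> c + int B - 1 \<Longrightarrow>
    (\<Sum>n<N. walk_prob S p n x 0) \<le> (\<Sum>w\<in>window c. entrance_dist S p c x w * green_fun S p w 0)"
proof (induction N arbitrary: x)
  case 0
  then show ?case by simp
next
  case (Suc N)
  show ?case
  proof (cases "c \<le> x")
    case True
    have "(\<Sum>n<Suc N. walk_prob S p n x 0) \<le> green_fun S p x 0"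
      unfolding green_fun_def by (rule sum_le_suminf) auto
    also have "\<dots> = (\<Sum>w\<in>window c. entrance_dist S p c x w * green_fun S p w 0)"
      using True Suc.prems
      by (simp only: entrance_dist_above[OF True] if_one_zero_mult) (simp add: finite_window window_def)
    finally show ?thesis .
  next
    case False
    then have xc: "x < c" by simp
    have "(\<Sum>n<Suc N. walk_prob S p n x 0) = (\<Sum>n<N. walk_prob S p (Suc n) x 0)"
      using xc assms by (simp only: sum.lessThan_Suc_shift) (simp del: walk_prob.simps(2))
    also have "(\<Sum>n<N. walk_prob S p (Suc n) x 0) = (\<Sum>z\<in>S. p x z * (\<Sum>n<N. walk_prob S p n (x + z) 0))"
      by (simp only: walk_prob_Suc_first sum_distrib_left) (rule sum.swap)
    also have "\<dots> \<le> (\<Sum>z\<in>S. p x z * (\<Sum>w\<in>window c. entrance_dist S p c (x + z) w * green_fun S p w 0))"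
    proof (rule sum_mono)
      fix z assume "z \<in> S"
      then have "x + z \<le> c + int B - 1" using xc steps_le[of z] by linarith
      then show "p x z * (\<Sum>n<N. walk_prob S p n (x + z) 0)
          \<le> p x z * (\<Sum>w\<in>window c. entrance_dist S p c (x + z) w * green_fun S p w 0)"
        by (rule mult_left_mono[OF Suc.IH]) simp
    qed
    also have "\<dots> = (\<Sum>w\<in>window c. (\<Sum>z\<in>S. p x z * entrance_dist S p c (x + z) w) * green_fun S p w 0)"
      by (simp only: sum_distrib_left sum_distrib_right mult.assoc) (rule sum.swap)
    also have "\<dots> = (\<Sum>w\<in>window c. entrance_dist S p c x w * green_fun S p w 0)"
      by (simp only: entrance_dist_first_step[OF xc])
    finally show ?thesis .
  qed
qed

lemma green_fun_entrance_repr: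
  assumes "c \<le> 0" and "x \<le> c + int B - 1"
  shows "green_fun S p x 0 = (\<Sum>w\<in>window c. entrance_dist S p c x w * green_fun S p w 0)"
proof (rule antisym)
  show "green_fun S p x 0 \<le> (\<Sum>w\<in>window c. entrance_dist S p c x w * green_fun S p w 0)"
    unfolding green_fun_def[of S p x 0]
    by (rule suminf_le_const) (auto intro: green_partial_le_entrance[OF assms])
  have "(\<Sum>w\<in>window c. entrance_dist S p c x w * green_fun S p w 0)
      = (\<Sum>k. \<Sum>w\<in>window c. first_entrance S p c k x w * green_fun S p w 0)"
    unfolding entrance_dist_def by (simp add: suminf_sum)
  also have "\<dots> \<le> green_fun S p x 0"
  proof (rule suminf_le_const)
    fix K
    have "(\<Sum>k<K. \<Sum>w\<in>window c. first_entrance S p c k x w * green_fun S p w 0)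
        = (\<Sum>w\<in>window c. (\<Sum>k<K. first_entrance S p c k x w) * green_fun S p w 0)"
      by (simp add: sum_distrib_right) (rule sum.swap)
    also have "\<dots> \<le> green_fun S p x 0"
      by (rule entrance_partial_green_le[OF assms])
    finally show "(\<Sum>k<K. \<Sum>w\<in>window c. first_entrance S p c k x w * green_fun S p w 0) \<le> green_fun S p x 0" .
  qed simp
  finally show "(\<Sum>w\<in>window c. entrance_dist S p c x w * green_fun S p w 0) \<le> green_fun S p x 0" .
qed

lemma entrance_dist_ge_up_steps: "(\<Prod>i\<in>{1..d}. p (c - int i) 1) \<le> entrance_dist S p c (c - int d) c"
proof (induction d)
  case 0
  then show ?case by (simp add: entrance_dist_above)
next
  case (Suc d)
  define x where "x = c - int (Suc d)"
  have "(\<Prod>i\<in>{1..Suc d}. p (c - int i) 1) = p x 1 * (\<Prod>i\<in>{1..d}. p (c - int i) 1)"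
    by (simp add: prod.nat_ivl_Suc' mult.commute x_def)
  also have "\<dots> \<le> p x 1 * entrance_dist S p c (x + 1) c"
    using Suc.IH by (intro mult_left_mono) (simp_all add: x_def)
  also have "\<dots> \<le> (\<Sum>z\<in>S. p x z * entrance_dist S p c (x + z) c)"
    by (rule member_le_sum[of 1 S "\<lambda>z. p x z * entrance_dist S p c (x + z) c"])
       (simp_all add: one_in_steps finite_steps)
  also have "\<dots> = entrance_dist S p c x c"
    by (rule entrance_dist_first_step[symmetric]) (simp add: x_def)
  finally show ?case by (simp add: x_def)
qed

lemma ladder_weight_le_up_steps:
  assumes "d \<le> B"
  shows "ladder_weight c \<le> (\<Prod>i\<in>{1..d}. p (c - int i) 1)"
proof -
  have "ladder_weight c = (\<Prod>i\<in>{1..d}. p (c - int i) 1) * (\<Prod>i\<in>{1..B} - {1..d}. p (c - int i) 1)"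
    unfolding ladder_weight_def using assms by (subst prod.subset_diff[of "{1..d}"]) (auto simp: mult.commute)
  also have "\<dots> \<le> (\<Prod>i\<in>{1..d}. p (c - int i) 1) * 1"
    using prod_mono_ennreal[of "{1..B} - {1..d}" "\<lambda>i. p (c - int i) 1" "\<lambda>_. 1"]
    by (intro mult_left_mono) (simp_all add: kernel_le_1 one_in_steps)
  finally show ?thesis by simp
qed

lemma ladder_weight_le_1: "ladder_weight c \<le> 1"
  using ladder_weight_le_up_steps[of 0 c] by simp

lemma entrance_dist_ge_ladder_weight:
  assumes "x < c" and "c - int B \<le> x"
  shows "ladder_weight c \<le> entrance_dist S p c x c"
proof -
  have "ladder_weight c \<le> (\<Prod>i\<in>{1..nat (c - x)}. p (c - int i) 1)"
    using assms by (intro ladder_weight_le_up_steps) auto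
  also have "\<dots> \<le> entrance_dist S p c x c"
    using entrance_dist_ge_up_steps[of c "nat (c - x)"] assms by simp
  finally show ?thesis .
qed

end

section \<open>Contraction of the oscillation of the Green function\<close>

locale doeblin_kernel = bounded_kernel +
  fixes \<epsilon> :: real
  assumes step_up_pos: "\<And>x. 0 < p x 1"
    and exit_time_finite: "\<And>m. exit_time S p m < \<infinity>"
    and ladder_bound_finite: "ladder_bound S p 0 < \<infinity>"
    and eps_pos: "0 < \<epsilon>"
    and frequently_ladder_weight: "\<exists>\<^sub>F c in at_bot. ennreal \<epsilon> \<le> ladder_weight c"
begin

definition green0 :: "int \<Rightarrow> real" where
  "green0 x = enn2real (green_fun S p x 0)"

definition entrance :: "int \<Rightarrow> int \<Rightarrow> int \<Rightarrow> real" where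
  "entrance c x w = enn2real (entrance_dist S p c x w)"

definition green_max :: "int \<Rightarrow> real" where
  "green_max c = Max (green0 ` window c)"

definition green_min :: "int \<Rightarrow> real" where
  "green_min c = Min (green0 ` window c)"

definition green_osc :: "int \<Rightarrow> real" where
  "green_osc c = green_max c - green_min c"

lemma green_fun_eq_green0: "green_fun S p x 0 = ennreal (green0 x)"
  using le_less_trans[OF green_fun_le_ladder_bound ladder_bound_finite]
  by (simp add: green0_def less_top[symmetric])

lemma green0_nonneg: "0 \<le> green0 x"
  by (simp add: green0_def)

lemma one_le_green0_zero: "1 \<le> green0 0"
proof -
  have "1 \<le> green_fun S p 0 0"
    by (subst green_fun_first_step) simp
  then show ?thesis by (simp add: green_fun_eq_green0 ennreal_ge_1)
qed

lemma entrance_dist_eq_entrance: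
  assumes "x \<le> c + int B - 1" and "w \<in> window c"
  shows "entrance_dist S p c x w = ennreal (entrance c x w)"
proof -
  have "entrance_dist S p c x w \<le> 1"
    using member_le_sum[of w "window c" "entrance_dist S p c x"] assms finite_window
      entrance_dist_sum[OF exit_time_finite assms(1)] by simp
  then have "entrance_dist S p c x w < top"
    using ennreal_one_less_top by (rule le_less_trans)
  then show ?thesis by (simp add: entrance_def less_top[symmetric])
qed

lemma entrance_nonneg: "0 \<le> entrance c x w"
  by (simp add: entrance_def)

lemma entrance_sum: "x \<le> c + int B - 1 \<Longrightarrow> (\<Sum>w\<in>window c. entrance c x w) = 1"
  using entrance_dist_sum[OF exit_time_finite, of x c] entrance_dist_eq_entrance[of x c]
  by (simp add: entrance_nonneg sum_ennreal cong: sum.cong)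

lemma green0_entrance_repr:
  assumes "c \<le> 0" and "x \<le> c + int B - 1"
  shows "green0 x = (\<Sum>w\<in>window c. entrance c x w * green0 w)"
proof -
  have "ennreal (green0 x) = (\<Sum>w\<in>window c. ennreal (entrance c x w * green0 w))"
    using green_fun_entrance_repr[OF assms] entrance_dist_eq_entrance[OF assms(2)]
    by (simp add: green_fun_eq_green0 ennreal_mult entrance_nonneg green0_nonneg)
  also have "\<dots> = ennreal (\<Sum>w\<in>window c. entrance c x w * green0 w)"
    by (simp add: sum_ennreal entrance_nonneg green0_nonneg)
  finally show ?thesis
    by (simp add: green0_nonneg entrance_nonneg sum_nonneg)
qed

lemma green_max_in: "green_max c \<in> green0 ` window c"
  unfolding green_max_def using finite_window mem_window_self by (intro Max_in) auto

lemma green_min_in: "green_min c \<in> green0 ` window c"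
  unfolding green_min_def using finite_window mem_window_self by (intro Min_in) auto

lemma green0_le_green_max: "w \<in> window c \<Longrightarrow> green0 w \<le> green_max c"
  unfolding green_max_def using finite_window by (intro Max_ge) auto

lemma green_min_le_green0: "w \<in> window c \<Longrightarrow> green_min c \<le> green0 w"
  unfolding green_min_def using finite_window by (intro Min_le) auto

lemma green0_between:
  assumes "c \<le> 0" and "x \<le> c + int B - 1"
  shows "green_min c \<le> green0 x \<and> green0 x \<le> green_max c"
proof -
  have "(\<Sum>w\<in>window c. entrance c x w * green_min c) \<le> (\<Sum>w\<in>window c. entrance c x w * green0 w)"
    by (intro sum_mono mult_left_mono green_min_le_green0 entrance_nonneg)
  moreover have "(\<Sum>w\<in>window c. entrance c x w * green0 w) \<le> (\<Sum>w\<in>window c. entrance c x w * green_max c)"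
    by (intro sum_mono mult_left_mono green0_le_green_max entrance_nonneg)
  ultimately show ?thesis
    using green0_entrance_repr[OF assms] entrance_sum[OF assms(2)] by (simp flip: sum_distrib_right)
qed

lemma green_osc_nonneg: "0 \<le> green_osc c"
  using green0_le_green_max[OF mem_window_self[of c]] green_min_le_green0[OF mem_window_self[of c]]
  by (simp add: green_osc_def)

lemma green_osc_antimono:
  assumes "c' \<le> c" and "c \<le> 0"
  shows "green_osc c' \<le> green_osc c"
proof -
  obtain w w' where w: "w \<in> window c'" "green_max c' = green0 w"
    and w': "w' \<in> window c'" "green_min c' = green0 w'"
    using green_max_in green_min_in by blast
  moreover have "w \<le> c + int B - 1" "w' \<le> c + int B - 1"
    using w(1) w'(1) assms by (simp_all add: window_def)
  ultimately show ?thesis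
    using green0_between[OF assms(2), of w] green0_between[OF assms(2), of w'] by (simp add: green_osc_def)
qed

lemma ladder_weight_le_entrance:
  "x < c \<Longrightarrow> c - int B \<le> x \<Longrightarrow> enn2real (ladder_weight c) \<le> entrance c x c"
  unfolding entrance_def using entrance_dist_eq_entrance[of x c c] mem_window_self B_pos
  by (intro enn2real_mono entrance_dist_ge_ladder_weight) auto

lemma ladder_weight_pos: "0 < enn2real (ladder_weight c)"
proof -
  have "\<forall>i. p (c - int i) 1 \<noteq> 0"
    using step_up_pos by (metis less_irrefl)
  then have "ladder_weight c \<noteq> 0"
    by (simp add: ladder_weight_def)
  moreover have "ladder_weight c < \<infinity>"
    using ladder_weight_le_1[of c] by (simp add: le_less_trans)
  ultimately show ?thesis by (simp add: enn2real_positive_iff zero_less_iff_neq_zero)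
qed

text \<open>Doeblin's argument: from anywhere in \<open>window (c - B)\<close> the walk enters \<open>{c..}\<close> exactly at
  \<open>c\<close> with probability at least \<open>ladder_weight c\<close>.\<close>

lemma green_osc_step:
  assumes "c \<le> 0"
  shows "green_osc (c - int B) \<le> (1 - enn2real (ladder_weight c)) * green_osc c"
proof -
  obtain x x' where x: "x \<in> window (c - int B)" "green_max (c - int B) = green0 x"
    and x': "x' \<in> window (c - int B)" "green_min (c - int B) = green0 x'"
    using green_max_in green_min_in by blast
  have bounds: "x < c" "c - int B \<le> x" "x' < c" "c - int B \<le> x'"
    using x(1) x'(1) by (auto simp: window_def)
  then have "green0 x - green0 x' = (\<Sum>w\<in>window c. entrance c x w * green0 w) - (\<Sum>w\<in>window c. entrance c x' w * green0 w)"
    using assms B_pos by (simp add: green0_entrance_repr)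
  also have "\<dots> \<le> (1 - enn2real (ladder_weight c)) * (green_max c - green_min c)"
    using bounds B_pos
    by (intro weighted_sum_diff_le[where c = c] finite_window mem_window_self entrance_nonneg entrance_sum
        ladder_weight_le_entrance green0_le_green_max green_min_le_green0) auto
  finally show ?thesis using x x' by (simp add: green_osc_def)
qed

lemma exists_ladder_weight_below: "\<exists>c'\<le>c. \<epsilon> \<le> enn2real (ladder_weight c')"
proof -
  obtain c' where "c' \<le> c" "ennreal \<epsilon> \<le> ladder_weight c'"
    using frequently_ladder_weight by (auto simp: frequently_def eventually_at_bot_linorder)
  moreover have "ladder_weight c' < \<infinity>"
    using ladder_weight_le_1[of c'] by (simp add: le_less_trans)
  ultimately show ?thesis
    using eps_pos by (intro exI[of _ c']) (auto dest: enn2real_mono)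
qed

lemma eps_le_1: "\<epsilon> \<le> 1"
proof -
  obtain c where "\<epsilon> \<le> enn2real (ladder_weight c)"
    using exists_ladder_weight_below by blast
  also have "\<dots> \<le> 1"
    using ladder_weight_le_1[of c] by (simp add: enn2real_leI)
  finally show ?thesis .
qed

lemma green_osc_power: "\<exists>c\<le>0. green_osc c \<le> (1 - \<epsilon>) ^ k * green_osc 0"
proof (induction k)
  case 0
  then show ?case by auto
next
  case (Suc k)
  then obtain c where c: "c \<le> 0" "green_osc c \<le> (1 - \<epsilon>) ^ k * green_osc 0"
    by blast
  obtain c' where c': "c' \<le> c" "\<epsilon> \<le> enn2real (ladder_weight c')"
    using exists_ladder_weight_below by blast
  have "green_osc (c' - int B) \<le> (1 - enn2real (ladder_weight c')) * green_osc c'"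
    using c c' by (intro green_osc_step) simp
  also have "\<dots> \<le> (1 - \<epsilon>) * green_osc c"
    using c c' green_osc_antimono[of c' c] green_osc_nonneg eps_le_1
    by (intro mult_mono) auto
  also have "\<dots> \<le> (1 - \<epsilon>) * ((1 - \<epsilon>) ^ k * green_osc 0)"
    using c(2) eps_le_1 by (intro mult_left_mono) auto
  finally show ?case
    using c c' by (intro exI[of _ "c' - int B"]) auto
qed

lemma green_osc_small: "0 < \<eta> \<Longrightarrow> \<exists>c\<le>0. green_osc c < \<eta>"
proof (cases "green_osc 0 = 0")
  case False
  assume "0 < \<eta>"
  then have osc0: "0 < green_osc 0" using green_osc_nonneg[of 0] False by simp
  obtain k where "(1 - \<epsilon>) ^ k < \<eta> / green_osc 0"
    using real_arch_pow_inv[of "\<eta> / green_osc 0" "1 - \<epsilon>"] \<open>0 < \<eta>\<close> osc0 eps_pos by auto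
  then have "(1 - \<epsilon>) ^ k * green_osc 0 < \<eta>"
    using osc0 by (simp add: pos_less_divide_eq)
  then show ?thesis
    using green_osc_power[of k] by force
qed auto

lemma green0_close:
  assumes "c \<le> 0" and "x < c" and "y < c"
  shows "\<bar>green0 x - green0 y\<bar> \<le> green_osc c"
proof -
  have "x \<le> c + int B - 1" "y \<le> c + int B - 1"
    using assms B_pos by auto
  then have "green_min c \<le> green0 x \<and> green0 x \<le> green_max c" "green_min c \<le> green0 y \<and> green0 y \<le> green_max c"
    using green0_between[OF assms(1)] by blast+
  then show ?thesis
    unfolding green_osc_def abs_le_iff by linarith
qed

lemma ladder_weight_le_green0: "x < 0 \<Longrightarrow> enn2real (ladder_weight 0) \<le> green0 x"
proof -
  have near: "enn2real (ladder_weight 0) \<le> green0 y" if "y \<in> window (- int B)" for y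
  proof -
    have y: "y < 0" "- int B \<le> y"
      using that by (auto simp: window_def)
    have "enn2real (ladder_weight 0) \<le> entrance 0 y 0"
      using y by (intro ladder_weight_le_entrance) auto
    also have "\<dots> \<le> entrance 0 y 0 * green0 0"
      using mult_left_mono[OF one_le_green0_zero entrance_nonneg[of 0 y 0]] by simp
    also have "\<dots> \<le> (\<Sum>w\<in>window 0. entrance 0 y w * green0 w)"
      using mem_window_self finite_window
      by (intro member_le_sum[of 0 "window 0" "\<lambda>w. entrance 0 y w * green0 w"])
         (auto simp: entrance_nonneg green0_nonneg)
    also have "\<dots> = green0 y"
      using y B_pos by (intro green0_entrance_repr[symmetric]) auto
    finally show ?thesis .
  qed
  assume "x < 0"
  show ?thesis
  proof (cases "x < - int B")
    case True
    obtain y where y: "y \<in> window (- int B)" "green_min (- int B) = green0 y"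
      using green_min_in by blast
    have "green_min (- int B) \<le> green0 x"
      using green0_between[of "- int B" x] True by simp
    then show ?thesis
      using near[OF y(1)] y(2) by linarith
  next
    case False
    then have "x \<in> window (- int B)"
      using \<open>x < 0\<close> by (simp add: window_def)
    then show ?thesis by (rule near)
  qed
qed

theorem green_fun_limit: "\<exists>L>0. ((\<lambda>x. green_fun S p x 0) \<longlongrightarrow> ennreal L) at_bot"
proof -
  have "\<exists>c. \<forall>x y. x < c \<longrightarrow> y < c \<longrightarrow> dist (green0 x) (green0 y) < \<eta>" if "0 < \<eta>" for \<eta>
  proof -
    obtain c where c: "c \<le> 0" "green_osc c < \<eta>"
      using green_osc_small[OF \<open>0 < \<eta>\<close>] by blast
    have "dist (green0 x) (green0 y) < \<eta>" if "x < c" "y < c" for x y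
      using green0_close[OF c(1) that] c(2) by (simp add: dist_real_def)
    then show ?thesis by blast
  qed
  then obtain L where lim: "(green0 \<longlongrightarrow> L) at_bot"
    using tendsto_at_bot_if_Cauchy by blast
  have "eventually (\<lambda>x. enn2real (ladder_weight 0) \<le> green0 x) at_bot"
    unfolding eventually_at_bot_linorder using ladder_weight_le_green0 by (intro exI[of _ "-1"]) simp
  then have "enn2real (ladder_weight 0) \<le> L"
    using tendsto_lowerbound[OF lim] trivial_limit_at_bot_linorder by blast
  then have "0 < L"
    using ladder_weight_pos[of 0] by simp
  moreover have "((\<lambda>x. green_fun S p x 0) \<longlongrightarrow> ennreal L) at_bot"
    unfolding green_fun_eq_green0 using lim by (rule tendsto_ennrealI)
  ultimately show ?thesis by blast
qed

end

section \<open>Stationary ergodic environments\<close>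

lemma frequently_at_bot_int:
  "(\<exists>\<^sub>F c in at_bot. Q c) \<longleftrightarrow> (\<forall>N::nat. \<exists>j\<ge>N. Q (- int j))"
proof
  assume "\<exists>\<^sub>F c in at_bot. Q (c::int)"
  then have below: "\<exists>c\<le>M. Q c" for M
    by (auto simp: frequently_def eventually_at_bot_linorder)
  show "\<forall>N::nat. \<exists>j\<ge>N. Q (- int j)"
  proof
    fix N :: nat
    obtain c where "c \<le> - int N" "Q c" using below by blast
    then show "\<exists>j\<ge>N. Q (- int j)" by (intro exI[of _ "nat (- c)"]) auto
  qed
next
  assume *: "\<forall>N::nat. \<exists>j\<ge>N. Q (- int j)"
  show "\<exists>\<^sub>F c in at_bot. Q c"
    unfolding frequently_def eventually_at_bot_linorder
  proof
    assume "\<exists>M. \<forall>c\<le>M. \<not> Q c"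
    then obtain M where "\<forall>c\<le>M. \<not> Q c" by blast
    moreover obtain j where "nat (- M) \<le> j" "Q (- int j)" using * by blast
    moreover from \<open>nat (- M) \<le> j\<close> have "- int j \<le> M" by (simp add: nat_le_iff)
    ultimately show False by blast
  qed
qed

lemma eventually_at_bot_add_iff:
  "eventually (\<lambda>c. P (c + z)) at_bot \<longleftrightarrow> eventually P (at_bot :: int filter)"
  unfolding eventually_at_bot_linorder
proof
  assume "\<exists>N. \<forall>c\<le>N. P (c + z)"
  then obtain N where N: "\<forall>c\<le>N. P (c + z)" by blast
  have "P c" if "c \<le> N + z" for c using N[rule_format, of "c - z"] that by simp
  then show "\<exists>N. \<forall>c\<le>N. P c" by blast
next
  assume "\<exists>N. \<forall>c\<le>N. P c"
  then obtain N where N: "\<forall>c\<le>N. P c" by blast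
  have "P (c + z)" if "c \<le> N - z" for c using N[rule_format, of "c + z"] that by simp
  then show "\<exists>N. \<forall>c\<le>N. P (c + z)" by blast
qed

lemma (in prob_space) exists_pos_prob_ge:
  fixes f :: "'a \<Rightarrow> real"
  assumes "f \<in> borel_measurable M" and "AE x in M. 0 < f x"
  shows "\<exists>\<epsilon>>0. 0 < prob {x \<in> space M. \<epsilon> \<le> f x}"
proof (rule ccontr)
  assume "\<not> ?thesis"
  then have "prob {x \<in> space M. inverse (real (Suc n)) \<le> f x} = 0" for n
    using measure_nonneg[of M] by (metis inverse_Suc order_le_less)
  moreover have "{x \<in> space M. inverse (real (Suc n)) \<le> f x} \<in> events" for n
    using assms(1) by measurable
  ultimately have "AE x in M. \<forall>n. f x < inverse (real (Suc n))"
    unfolding AE_all_countable by (auto simp: prob_eq_0 not_le)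
  with assms(2) have "AE x in M. False"
  proof eventually_elim
    case (elim x)
    then obtain n where "0 < n" "inverse (real n) < f x"
      using ex_inverse_of_nat_less by blast
    with elim(2)[rule_format, of "n - 1"] show False by simp
  qed
  then show False by simp
qed

lemma shift_shift: "shift a (shift b \<omega>) = shift (a + b) \<omega>"
  by (simp add: shift_def fun_eq_iff algebra_simps)

lemma shift_0 [simp]: "shift 0 \<omega> = \<omega>"
  by (simp add: shift_def)

lemma measurable_shift: "shift z \<in> measurable env_space env_space"
  unfolding shift_def[abs_def] env_space_def
  by (rule measurable_PiM_single') (auto intro: measurable_component_singleton simp: space_PiM)

lemma shift_vimage_frequently:
  "shift z -` {\<omega>. \<exists>\<^sub>F c in at_bot. shift c \<omega> \<in> A} = {\<omega>. \<exists>\<^sub>F c in at_bot. shift c \<omega> \<in> A}"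
  using eventually_at_bot_add_iff[of "\<lambda>c. shift c _ \<notin> A" z]
  by (simp add: shift_shift frequently_def)

locale stationary_env =
  fixes B :: nat and P :: "env measure"
  assumes stationary_ergodic: "stationary_ergodic B P"
begin

sublocale prob_space P
  using stationary_ergodic by (simp add: stationary_ergodic_def)

lemma sets_P: "sets P = sets env_space"
  using stationary_ergodic by (simp add: stationary_ergodic_def)

lemma space_P: "space P = UNIV"
  using sets_eq_imp_space_eq[OF sets_P] by (simp add: env_space_def space_PiM)

lemma distr_shift_P: "distr P P (shift z) = P"
  using stationary_ergodic by (simp add: stationary_ergodic_def)

lemma measurable_shift_P: "shift z \<in> measurable P P"
  using measurable_shift by (simp add: measurable_cong_sets[OF sets_P sets_P])

lemma nn_integral_shift:
  assumes "f \<in> borel_measurable P"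
  shows "(\<integral>\<^sup>+ \<omega>. f (shift z \<omega>) \<partial>P) = (\<integral>\<^sup>+ \<omega>. f \<omega> \<partial>P)"
proof -
  have "f \<in> borel_measurable (distr P P (shift z))"
    using assms by (simp add: distr_shift_P)
  from nn_integral_distr[OF measurable_shift_P this] show ?thesis
    by (simp add: distr_shift_P)
qed

lemma AE_shift:
  assumes "AE \<omega> in P. Q \<omega>"
  shows "AE \<omega> in P. Q (shift z \<omega>)"
proof -
  have "AE \<omega> in distr P P (shift z). Q \<omega>"
    using assms by (subst distr_shift_P)
  then show ?thesis by (rule AE_distrD[OF measurable_shift_P])
qed

lemma prob_shift_vimage:
  assumes "A \<in> events"
  shows "prob (shift z -` A) = prob A"
proof -
  have "measure (distr P P (shift z)) A = prob (shift z -` A \<inter> space P)"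
    by (rule measure_distr[OF measurable_shift_P assms])
  then show ?thesis by (simp add: distr_shift_P space_P)
qed

text \<open>The set of such \<open>\<omega>\<close> is shift invariant and has probability at least \<open>prob A\<close>, so
  ergodicity makes it almost sure.\<close>

lemma AE_frequently_shift_in:
  assumes A: "A \<in> events" and pos: "0 < prob A"
  shows "AE \<omega> in P. \<exists>\<^sub>F c in at_bot. shift c \<omega> \<in> A"
proof -
  define U where "U N = (\<Union>j\<in>{N..}. shift (- int j) -` A)" for N :: nat
  define R where "R = {\<omega>. \<exists>\<^sub>F c in at_bot. shift c \<omega> \<in> A}"
  have vimage_events: "shift z -` A \<in> events" for z
    using measurable_sets[OF measurable_shift_P A] by (simp add: space_P)
  have U_events: "U N \<in> events" for N
    unfolding U_def using vimage_events by (intro sets.countable_UN'') auto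
  have R_eq: "R = (\<Inter>N. U N)"
    unfolding R_def U_def frequently_at_bot_int by (auto simp: Bex_def)
  have R_events: "R \<in> events"
    unfolding R_eq using U_events by (intro sets.countable_INT'') (auto simp: space_P[symmetric])
  have "prob A \<le> prob (U N)" for N
    using prob_shift_vimage[OF A, of "- int N"] U_events
    by (metis U_def finite_measure_mono UN_upper atLeast_iff order_refl)
  moreover have "(\<lambda>N. prob (U N)) \<longlonglongrightarrow> prob R"
    unfolding R_eq using U_events
    by (intro finite_Lim_measure_decseq) (auto simp: decseq_def U_def intro: order_trans)
  ultimately have "0 < prob R"
    using pos LIMSEQ_le_const by (metis order_less_le_trans)
  moreover have "prob R = 0 \<or> prob R = 1"
    using stationary_ergodic R_events shift_vimage_frequently[of _ A]
    by (simp add: stationary_ergodic_def R_def)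
  ultimately have "prob R = 1" by simp
  then show ?thesis
    using R_events by (simp add: prob_eq_1 R_def)
qed

end

section \<open>The quenched walk\<close>

definition quenched_kernel :: "(env \<Rightarrow> int \<Rightarrow> real) \<Rightarrow> env \<Rightarrow> int \<Rightarrow> int \<Rightarrow> ennreal" where
  "quenched_kernel pih \<omega> x z = ennreal (pih (shift x \<omega>) z)"

lemma quenched_kernel_shift:
  "quenched_kernel pih (shift a \<omega>) = (\<lambda>x. quenched_kernel pih \<omega> (x + a))"
  by (simp add: quenched_kernel_def fun_eq_iff shift_shift)

lemma measurable_walk_prob:
  assumes "\<And>x z. z \<in> S \<Longrightarrow> (\<lambda>\<omega>. p \<omega> x z) \<in> borel_measurable M"
  shows "(\<lambda>\<omega>. walk_prob S (p \<omega>) n x y) \<in> borel_measurable M"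
  by (induction n arbitrary: y) (auto intro!: borel_measurable_sum borel_measurable_times_ennreal assms)

lemma measurable_walk_prob_below:
  assumes "\<And>x z. z \<in> S \<Longrightarrow> (\<lambda>\<omega>. p \<omega> x z) \<in> borel_measurable M"
  shows "(\<lambda>\<omega>. walk_prob_below S (p \<omega>) L n x y) \<in> borel_measurable M"
proof (induction n arbitrary: x)
  case (Suc n)
  then show ?case
    by (cases "x \<le> L") (auto intro!: borel_measurable_sum borel_measurable_times_ennreal assms)
qed simp

lemma measurable_stay_below:
  assumes "\<And>x z. z \<in> S \<Longrightarrow> (\<lambda>\<omega>. p \<omega> x z) \<in> borel_measurable M"
  shows "(\<lambda>\<omega>. stay_below S (p \<omega>) L n x) \<in> borel_measurable M"
proof (induction n arbitrary: x)
  case (Suc n)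
  then show ?case
    by (cases "x \<le> L") (auto intro!: borel_measurable_sum borel_measurable_times_ennreal assms)
qed simp

lemma sum_green_below_le_exit_time: "(\<Sum>j. green_below S p M M (M - int j)) \<le> exit_time S p M"
proof (rule suminf_le_const)
  fix N
  have "(\<Sum>j<N. green_below S p M M (M - int j)) = (\<Sum>n. \<Sum>y\<in>(\<lambda>j. M - int j) ` {..<N}. walk_prob_below S p M n M y)"
    by (simp add: green_below_def suminf_sum sum.reindex inj_on_def)
  also have "\<dots> \<le> exit_time S p M"
    unfolding exit_time_def by (intro suminf_le walk_prob_below_sum_le_stay_below) auto
  finally show "(\<Sum>j<N. green_below S p M M (M - int j)) \<le> exit_time S p M" .
qed simp

locale rwre = stationary_env +
  fixes pih :: "env \<Rightarrow> int \<Rightarrow> real"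
  assumes one_le_B: "1 \<le> B"
    and kernel: "env_kernel B P pih"
    and step_up_pos: "AE \<omega> in P. 0 < pih \<omega> 1"
    and expected_t1_finite: "(\<integral>\<^sup>+ \<omega>. expected_t1 B pih \<omega> \<partial>P) < \<infinity>"
begin

abbreviation "S \<equiv> steps B"

abbreviation "q \<equiv> quenched_kernel pih"

lemma pih_nonneg: "z \<in> S \<Longrightarrow> 0 \<le> pih \<omega> z"
  using kernel by (simp add: env_kernel_def)

lemma finite_steps: "finite S"
  by (rule finite_subset[of _ "{- int B..int B}"]) (auto simp: steps_def)

lemma one_in_steps: "1 \<in> S"
  using one_le_B by (simp add: steps_def)

lemma steps_le: "z \<in> S \<Longrightarrow> z \<le> int B"
  by (auto simp: steps_def abs_le_iff)

lemma trans_prob_eq_walk_prob: "ennreal (trans_prob B pih n \<omega> x y) = walk_prob S (q \<omega>) n x y"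
proof (induction n arbitrary: y)
  case (Suc n)
  have "0 \<le> trans_prob B pih n \<omega> x y" for y
    by (induction n arbitrary: y) (auto intro!: sum_nonneg mult_nonneg_nonneg pih_nonneg)
  then show ?case
    by (simp add: sum_ennreal[symmetric] ennreal_mult mult_nonneg_nonneg pih_nonneg Suc quenched_kernel_def)
qed simp

lemma stay_prob_eq_stay_below: "ennreal (stay_prob B pih n \<omega> x) = stay_below S (q \<omega>) 0 n x"
proof (induction n arbitrary: x)
  case (Suc n)
  have "0 \<le> stay_prob B pih n \<omega> x" for x
    by (induction n arbitrary: x) (auto intro!: sum_nonneg mult_nonneg_nonneg pih_nonneg)
  then show ?case
    by (simp add: sum_ennreal[symmetric] ennreal_mult mult_nonneg_nonneg pih_nonneg Suc quenched_kernel_def)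
qed simp

lemma green_eq_green_fun: "green B pih \<omega> x = green_fun S (q \<omega>) x 0"
  by (simp add: green_def green_fun_def trans_prob_eq_walk_prob)

lemma expected_t1_shift_eq_exit_time: "expected_t1 B pih (shift m \<omega>) = exit_time S (q \<omega>) m"
  by (simp add: expected_t1_def exit_time_def stay_prob_eq_stay_below quenched_kernel_shift stay_below_shift)

lemma ladder_bound_eq_sum_shift:
  "ladder_bound S (q \<omega>) 0 = (\<Sum>j. green_below S (q (shift (int j) \<omega>)) 0 0 (- int j))"
  by (simp add: ladder_bound_def quenched_kernel_shift green_below_shift)

lemma measurable_quenched_kernel: "z \<in> S \<Longrightarrow> (\<lambda>\<omega>. q \<omega> x z) \<in> borel_measurable P"
  unfolding quenched_kernel_def using kernel measurable_shift_P
  by (intro measurable_compose[OF _ measurable_ennreal] measurable_compose[OF measurable_shift_P])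
     (simp add: env_kernel_def)

lemma measurable_green: "(\<lambda>\<omega>. green B pih \<omega> x) \<in> borel_measurable P"
  unfolding green_eq_green_fun green_fun_def
  by (intro borel_measurable_suminf_order measurable_walk_prob measurable_quenched_kernel)

lemma measurable_green_below: "(\<lambda>\<omega>. green_below S (q \<omega>) M x y) \<in> borel_measurable P"
  unfolding green_below_def
  by (intro borel_measurable_suminf_order measurable_walk_prob_below measurable_quenched_kernel)

lemma measurable_expected_t1: "(\<lambda>\<omega>. expected_t1 B pih \<omega>) \<in> borel_measurable P"
  using expected_t1_shift_eq_exit_time[of 0] unfolding exit_time_def
  by (simp, intro borel_measurable_suminf_order measurable_stay_below measurable_quenched_kernel)

lemma measurable_ladder_bound: "(\<lambda>\<omega>. ladder_bound S (q \<omega>) 0) \<in> borel_measurable P"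
  unfolding ladder_bound_def by (intro borel_measurable_suminf_order measurable_green_below)

lemma ladder_bound_integral_finite: "(\<integral>\<^sup>+ \<omega>. ladder_bound S (q \<omega>) 0 \<partial>P) < \<infinity>"
proof -
  have "(\<integral>\<^sup>+ \<omega>. ladder_bound S (q \<omega>) 0 \<partial>P)
      = (\<Sum>j. \<integral>\<^sup>+ \<omega>. green_below S (q (shift (int j) \<omega>)) 0 0 (- int j) \<partial>P)"
    unfolding ladder_bound_eq_sum_shift
    by (rule nn_integral_suminf) (intro measurable_compose[OF measurable_shift_P] measurable_green_below)
  also have "\<dots> = (\<Sum>j. \<integral>\<^sup>+ \<omega>. green_below S (q \<omega>) 0 0 (- int j) \<partial>P)"
    using nn_integral_shift[OF measurable_green_below[of 0 0 "- int _"]] by simp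
  also have "\<dots> = (\<integral>\<^sup>+ \<omega>. (\<Sum>j. green_below S (q \<omega>) 0 0 (- int j)) \<partial>P)"
    by (rule nn_integral_suminf[symmetric]) (rule measurable_green_below)
  also have "\<dots> \<le> (\<integral>\<^sup>+ \<omega>. expected_t1 B pih \<omega> \<partial>P)"
    using sum_green_below_le_exit_time[of S _ 0] expected_t1_shift_eq_exit_time[of 0]
    by (intro nn_integral_mono) simp
  finally show ?thesis
    using expected_t1_finite by (rule le_less_trans)
qed

end

context rwre
begin

definition ladder_weight_env :: "env \<Rightarrow> real" where
  "ladder_weight_env \<omega> = (\<Prod>i\<in>{1..B}. pih (shift (- int i) \<omega>) 1)"

lemma measurable_ladder_weight_env: "ladder_weight_env \<in> borel_measurable P"
  unfolding ladder_weight_env_def[abs_def] using kernel one_in_steps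
  by (intro borel_measurable_prod measurable_compose[OF measurable_shift_P]) (simp add: env_kernel_def)

lemma AE_frequently_ladder_weight_env: "\<exists>\<epsilon>>0. AE \<omega> in P. \<exists>\<^sub>F c in at_bot. \<epsilon> \<le> ladder_weight_env (shift c \<omega>)"
proof -
  have "AE \<omega> in P. \<forall>x. 0 < pih (shift x \<omega>) 1"
    unfolding AE_all_countable using step_up_pos by (intro allI AE_shift)
  then have "AE \<omega> in P. 0 < ladder_weight_env \<omega>"
    by eventually_elim (auto simp: ladder_weight_env_def intro!: prod_pos)
  then obtain \<epsilon> where "0 < \<epsilon>" and pos: "0 < prob {\<omega> \<in> space P. \<epsilon> \<le> ladder_weight_env \<omega>}"
    using exists_pos_prob_ge[OF measurable_ladder_weight_env] by blast
  have "{\<omega> \<in> space P. \<epsilon> \<le> ladder_weight_env \<omega>} \<in> events"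
    using measurable_ladder_weight_env by measurable
  from AE_frequently_shift_in[OF this pos] \<open>0 < \<epsilon>\<close> show ?thesis
    by (auto simp: space_P)
qed

definition regular_env :: "real \<Rightarrow> env \<Rightarrow> bool" where
  "regular_env \<epsilon> \<omega> \<longleftrightarrow>
     (\<forall>x. (\<Sum>z\<in>S. pih (shift x \<omega>) z) = 1) \<and> (\<forall>x. 0 < pih (shift x \<omega>) 1)
     \<and> (\<forall>m. expected_t1 B pih (shift m \<omega>) < \<infinity>) \<and> ladder_bound S (q \<omega>) 0 < \<infinity>
     \<and> (\<exists>\<^sub>F c in at_bot. \<epsilon> \<le> ladder_weight_env (shift c \<omega>))"

lemma AE_regular_env: "\<exists>\<epsilon>>0. AE \<omega> in P. \<forall>a. regular_env \<epsilon> (shift a \<omega>)"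
proof -
  obtain \<epsilon> where "0 < \<epsilon>" and freq: "AE \<omega> in P. \<exists>\<^sub>F c in at_bot. \<epsilon> \<le> ladder_weight_env (shift c \<omega>)"
    using AE_frequently_ladder_weight_env by blast
  have sum1: "AE \<omega> in P. \<forall>x. (\<Sum>z\<in>S. pih (shift x \<omega>) z) = 1"
    using kernel unfolding AE_all_countable env_kernel_def by (intro allI AE_shift) simp
  have pos: "AE \<omega> in P. \<forall>x. 0 < pih (shift x \<omega>) 1"
    unfolding AE_all_countable using step_up_pos by (intro allI AE_shift)
  have "AE \<omega> in P. expected_t1 B pih \<omega> \<noteq> \<infinity>"
    using nn_integral_noteq_infinite[OF measurable_expected_t1] expected_t1_finite by simp
  then have t1: "AE \<omega> in P. \<forall>m. expected_t1 B pih (shift m \<omega>) < \<infinity>"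
    unfolding AE_all_countable by (intro allI AE_shift) (simp add: less_top)
  have ladder: "AE \<omega> in P. ladder_bound S (q \<omega>) 0 < \<infinity>"
    using nn_integral_noteq_infinite[OF measurable_ladder_bound] ladder_bound_integral_finite
    by (simp add: less_top)
  have "AE \<omega> in P. regular_env \<epsilon> \<omega>"
    using sum1 pos t1 ladder freq by eventually_elim (simp add: regular_env_def)
  then have "AE \<omega> in P. \<forall>a. regular_env \<epsilon> (shift a \<omega>)"
    unfolding AE_all_countable by (intro allI AE_shift)
  with \<open>0 < \<epsilon>\<close> show ?thesis by blast
qed

lemma doeblin_kernel_quenched:
  assumes "regular_env \<epsilon> \<omega>" and "0 < \<epsilon>"
  shows "doeblin_kernel S (q \<omega>) B \<epsilon>"
proof -
  interpret stoch_kernel S "q \<omega>"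
  proof
    show "(\<Sum>z\<in>S. q \<omega> x z) = 1" for x
      using assms(1) by (simp add: quenched_kernel_def sum_ennreal pih_nonneg regular_env_def)
  qed (rule finite_steps)
  interpret bounded_kernel S "q \<omega>" B
    by unfold_locales (simp_all add: steps_le one_in_steps)
  have "ladder_weight c = ennreal (ladder_weight_env (shift c \<omega>))" for c
    by (simp add: ladder_weight_def ladder_weight_env_def quenched_kernel_def shift_shift prod_ennreal
        pih_nonneg one_in_steps)
  then show ?thesis
    using assms by unfold_locales
      (auto simp: regular_env_def quenched_kernel_def expected_t1_shift_eq_exit_time[symmetric]
        elim!: frequently_elim1 intro: ennreal_leI)
qed

text \<open>The limit is taken along the negative integers as a \<open>liminf\<close>, which makes \<open>phi\<close> measurable
  without knowing in advance that the limit exists.\<close>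

definition phi :: "env \<Rightarrow> real" where
  "phi \<omega> = enn2real (liminf (\<lambda>n. green B pih \<omega> (- int n)))"

lemma phi_nonneg: "0 \<le> phi \<omega>"
  by (simp add: phi_def)

lemma measurable_phi: "phi \<in> borel_measurable P"
  unfolding phi_def[abs_def]
  by (intro borel_measurable_enn2real borel_measurable_liminf measurable_green)

lemma phi_limit:
  assumes "regular_env \<epsilon> \<omega>" and "0 < \<epsilon>"
  shows "(green B pih \<omega> \<longlongrightarrow> ennreal (phi \<omega>)) at_bot \<and> 0 < phi \<omega>
    \<and> ennreal (phi \<omega>) \<le> ladder_bound S (q \<omega>) 0"
proof -
  interpret doeblin_kernel S "q \<omega>" B \<epsilon>
    by (rule doeblin_kernel_quenched[OF assms])
  obtain L where "0 < L" and lim: "(green B pih \<omega> \<longlongrightarrow> ennreal L) at_bot"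
    using green_fun_limit unfolding green_eq_green_fun[abs_def] by blast
  have "filterlim (\<lambda>n::nat. - int n) at_bot sequentially"
    unfolding filterlim_at_bot eventually_sequentially
  proof
    fix Z :: int
    show "\<exists>N. \<forall>n\<ge>N. - int n \<le> Z" by (intro exI[of _ "nat (- Z)"]) auto
  qed
  then have "liminf (\<lambda>n. green B pih \<omega> (- int n)) = ennreal L"
    by (intro lim_imp_Liminf filterlim_compose[OF lim]) simp_all
  then have "phi \<omega> = L"
    using \<open>0 < L\<close> by (simp add: phi_def)
  moreover have "ennreal L \<le> ladder_bound S (q \<omega>) 0"
    using lim by (rule tendsto_upperbound)
      (simp_all add: green_eq_green_fun green_fun_le_ladder_bound)
  ultimately show ?thesis
    using \<open>0 < L\<close> lim by simp
qed

end

lemma filterlim_add_const_at_bot: "filterlim (\<lambda>x::int. x + z) at_bot at_bot"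
  unfolding filterlim_def le_filter_def eventually_filtermap eventually_at_bot_add_iff by simp

context rwre
begin

lemma green_last_step:
  assumes "x \<noteq> 0"
  shows "green B pih \<omega> x = (\<Sum>z\<in>S. ennreal (pih (shift (- z) \<omega>) z) * green B pih (shift (- z) \<omega>) (x + z))"
proof -
  have "green_fun S (q \<omega>) x (- z) = green_fun S (q (shift (- z) \<omega>)) (x + z) 0" for z
    using green_fun_shift[of S "q \<omega>" "- z" "x + z" 0] by (simp add: quenched_kernel_shift)
  then show ?thesis
    using green_fun_last_step[of S "q \<omega>" x 0] assms
    by (simp add: green_eq_green_fun quenched_kernel_def mult.commute)
qed

lemma phi_harmonic:
  assumes reg: "\<forall>a. regular_env \<epsilon> (shift a \<omega>)" and "0 < \<epsilon>"
  shows "(\<Sum>z\<in>S. phi (shift (- z) \<omega>) * pih (shift (- z) \<omega>) z) = phi \<omega>"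
proof -
  have lim: "(green B pih (shift a \<omega>) \<longlongrightarrow> ennreal (phi (shift a \<omega>))) at_bot" for a
    using phi_limit[OF reg[rule_format] \<open>0 < \<epsilon>\<close>] by blast
  have "((\<lambda>x. \<Sum>z\<in>S. ennreal (pih (shift (- z) \<omega>) z) * green B pih (shift (- z) \<omega>) (x + z))
      \<longlongrightarrow> (\<Sum>z\<in>S. ennreal (pih (shift (- z) \<omega>) z) * ennreal (phi (shift (- z) \<omega>)))) at_bot"
    by (intro tendsto_sum ennreal_tendsto_cmult filterlim_compose[OF lim filterlim_add_const_at_bot]) simp
  moreover have "eventually (\<lambda>x. (\<Sum>z\<in>S. ennreal (pih (shift (- z) \<omega>) z) * green B pih (shift (- z) \<omega>) (x + z))
      = green B pih \<omega> x) at_bot"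
    unfolding eventually_at_bot_linorder by (intro exI[of _ "-1"]) (simp add: green_last_step)
  ultimately have "(green B pih \<omega> \<longlongrightarrow> (\<Sum>z\<in>S. ennreal (pih (shift (- z) \<omega>) z) * ennreal (phi (shift (- z) \<omega>)))) at_bot"
    by (rule tendsto_cong[THEN iffD1, rotated])
  then have "ennreal (phi \<omega>) = (\<Sum>z\<in>S. ennreal (pih (shift (- z) \<omega>) z) * ennreal (phi (shift (- z) \<omega>)))"
    using lim[of 0] by (intro tendsto_unique[of at_bot]) auto
  also have "\<dots> = (\<Sum>z\<in>S. ennreal (phi (shift (- z) \<omega>) * pih (shift (- z) \<omega>) z))"
    by (intro sum.cong refl) (simp add: ennreal_mult pih_nonneg phi_nonneg mult.commute)
  also have "\<dots> = ennreal (\<Sum>z\<in>S. phi (shift (- z) \<omega>) * pih (shift (- z) \<omega>) z)"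
    by (rule sum_ennreal) (simp add: pih_nonneg phi_nonneg)
  finally show ?thesis
    by (subst (asm) ennreal_inj) (auto intro!: sum_nonneg mult_nonneg_nonneg simp: pih_nonneg phi_nonneg)
qed

lemma phi_integrable: "integrable P phi"
proof -
  obtain \<epsilon> where "0 < \<epsilon>" and reg: "AE \<omega> in P. \<forall>a. regular_env \<epsilon> (shift a \<omega>)"
    using AE_regular_env by blast
  have "(\<integral>\<^sup>+ \<omega>. ennreal (phi \<omega>) \<partial>P) \<le> (\<integral>\<^sup>+ \<omega>. ladder_bound S (q \<omega>) 0 \<partial>P)"
    using reg by (intro nn_integral_mono_AE, eventually_elim) (metis phi_limit shift_0 \<open>0 < \<epsilon>\<close>)
  also have "\<dots> < \<infinity>"
    by (rule ladder_bound_integral_finite)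
  finally show ?thesis
    by (intro integrableI_nonneg measurable_phi) (auto simp: phi_def)
qed

end

theorem theorem1p9:
  fixes B :: nat and P :: "env measure" and pih :: "env \<Rightarrow> int \<Rightarrow> real"
  assumes "B \<ge> 1"
    and "stationary_ergodic B P"
    and "env_kernel B P pih"
    and "AE \<omega> in P. pih \<omega> 1 > 0"
    and "(\<integral>\<^sup>+ \<omega>. expected_t1 B pih \<omega> \<partial>P) < \<infinity>"
  shows "\<exists>\<phi> :: env \<Rightarrow> real.
           (AE \<omega> in P. (green B pih \<omega> \<longlongrightarrow> ennreal (\<phi> \<omega>)) at_bot \<and> \<phi> \<omega> > 0)
         \<and> integrable P \<phi>
         \<and> (AE \<omega> in P. (\<Sum>z\<in>steps B. \<phi> (shift (- z) \<omega>) * pih (shift (- z) \<omega>) z) = \<phi> \<omega>)"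
proof -
  interpret rwre B P pih
    using assms by unfold_locales
  obtain \<epsilon> where "0 < \<epsilon>" and reg: "AE \<omega> in P. \<forall>a. regular_env \<epsilon> (shift a \<omega>)"
    using AE_regular_env by blast
  have "AE \<omega> in P. (green B pih \<omega> \<longlongrightarrow> ennreal (phi \<omega>)) at_bot \<and> phi \<omega> > 0"
    using reg by eventually_elim (metis phi_limit shift_0 \<open>0 < \<epsilon>\<close>)
  moreover have "AE \<omega> in P. (\<Sum>z\<in>steps B. phi (shift (- z) \<omega>) * pih (shift (- z) \<omega>) z) = phi \<omega>"
    using reg by eventually_elim (rule phi_harmonic[OF _ \<open>0 < \<epsilon>\<close>])
  ultimately show ?thesis
    using phi_integrable by blast
qed

end
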